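(* Let $\Gamma$ be a coloring and $\Omega$ a $k$-ordering of $T_{d,k}$, with root $\mathcal T$. (1) For every $g\in G_{d,k}$, the unique reduced word representing $g$ has length $m$ if and only if $\mathrm{dist}(g.\mathcal T,\mathcal T)=m$, where $\mathrm{dist}$ is the graph distance in the line graph of $T_{d,k}$. (2) The left action of $G_{d,k}$ on the $d$-cells of $T_{d,k}$ is simply transitive.
   Context: Fix $d,k\ge1$, $[\![d]\!]=\{0,\dots,d\}$. $G_{d,k}=\langle\alpha_0,\dots,\alpha_d\mid\alpha_i^k=e\rangle$ is the free product of $d+1$ cyclic groups of order $k$; a word $\alpha_{j_m}^{l_m}\cdots\alpha_{j_1}^{l_1}$ is reduced if all $l_r\in\{1,\dots,k-1\}$ and $j_r\ne j_{r+1}$; each element has a unique reduced word, of length $m$. The arboreal complex $T_{d,k}$: start from a single $d$-simplex $\mathcal T$, attach to each of its $(d-1)$-faces $k-1$ new $d$-simplices each using a new vertex, and inductively attach to each $(d-1)$-face created in the previous step $k-1$ new $d$-simplices each using a new vertex; $T_{d,k}$ is the union. Every $(d-1)$-cell lies in exactly $k$ $d$-cells. The line graph of $T_{d,k}$ has the $d$-cells as vertices, two being adjacent iff they share a $(d-1)$-cell. A coloring $\Gamma$ is a map from vertices to $[\![d]\!]$ injective on each $d$-cell, extended to cells by $\Gamma(\sigma)=\{\Gamma(v):v\in\sigma\}$. A $k$-ordering $\Omega$ assigns to each $(d-1)$-cell $\sigma$ a homomorphism $\Omega_\sigma:\mathbb Z/k\mathbb Z\to\mathrm{Sym}(\delta(\sigma))$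 with transitive image, $\delta(\sigma)$ being the set of $d$-cells containing $\sigma$. The left action of $G_{d,k}$ on $d$-cells: for a $d$-cell $\tau$, $i\in[\![d]\!]$, $l\in\mathbb Z$, put $\alpha_i^l.\tau=\Omega_\sigma(l).\tau$ where $\sigma$ is the unique $(d-1)$-face of $\tau$ of color $[\![d]\!]\setminus\{i\}$, and extend to words letter by letter (right-most letter first); this is a well-defined action. *)

theory Defs
  imports Main "HOL-Library.FSet" "HOL-Algebra.Elementary_Groups" "HOL-Algebra.Bij"
begin

text \<open>Vertices: the d+1 vertices of the root simplex are Root 0, ..., Root d; a vertex
  created when attaching a new d-simplex to the (d-1)-face sigma, as the j-th of the
  k-1 new simplices (j = 1..k-1), is New sigma j.\<close>

datatype vtx = Root nat | New "vtx fset" nat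

definition root :: "nat \<Rightarrow> vtx set" where
  "root d = Root ` {0..d}"

text \<open>new_faces d k n: the (d-1)-faces created in step n (step 0 = the root simplex).\<close>
primrec new_faces :: "nat \<Rightarrow> nat \<Rightarrow> nat \<Rightarrow> vtx set set" where
  "new_faces d k 0 = {root d - {Root i} | i. i \<le> d}"
| "new_faces d k (Suc n) =
     {insert (New (Abs_fset \<sigma>) j) (\<sigma> - {w}) | \<sigma> j w.
        \<sigma> \<in> new_faces d k n \<and> j \<in> {1..<k} \<and> w \<in> \<sigma>}"

text \<open>The d-simplices attached in step n+1.\<close>
definition new_cells :: "nat \<Rightarrow> nat \<Rightarrow> nat \<Rightarrow> vtx set set" where
  "new_cells d k n = {insert (New (Abs_fset \<sigma>) j) \<sigma> | \<sigma> j. \<sigma> \<in> new_faces d k n \<and> j \<in> {1..<k}}"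

definition cells :: "nat \<Rightarrow> nat \<Rightarrow> vtx set set" where
  "cells d k = insert (root d) (\<Union>n. new_cells d k n)"

definition faces :: "nat \<Rightarrow> nat \<Rightarrow> vtx set set" where
  "faces d k = {\<tau> - {v} | \<tau> v. \<tau> \<in> cells d k \<and> v \<in> \<tau>}"

definition verts :: "nat \<Rightarrow> nat \<Rightarrow> vtx set" where
  "verts d k = \<Union>(cells d k)"

definition delta :: "nat \<Rightarrow> nat \<Rightarrow> vtx set \<Rightarrow> vtx set set" where
  "delta d k \<sigma> = {\<tau> \<in> cells d k. \<sigma> \<subseteq> \<tau>}"

definition line_adj :: "nat \<Rightarrow> nat \<Rightarrow> vtx set \<Rightarrow> vtx set \<Rightarrow> bool" where
  "line_adj d k \<tau> \<tau>' \<longleftrightarrow> \<tau> \<in> cells d k \<and> \<tau>' \<in> cells d k \<and> \<tau> \<noteq> \<tau>' \<and>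
     (\<exists>\<sigma>\<in>faces d k. \<sigma> \<subseteq> \<tau> \<and> \<sigma> \<subseteq> \<tau>')"

definition line_walk :: "nat \<Rightarrow> nat \<Rightarrow> vtx set list \<Rightarrow> bool" where
  "line_walk d k p \<longleftrightarrow> p \<noteq> [] \<and> set p \<subseteq> cells d k \<and>
     (\<forall>i. Suc i < length p \<longrightarrow> line_adj d k (p ! i) (p ! Suc i))"

definition line_dist :: "nat \<Rightarrow> nat \<Rightarrow> vtx set \<Rightarrow> vtx set \<Rightarrow> nat" where
  "line_dist d k \<tau> \<tau>' =
     (LEAST m. \<exists>p. line_walk d k p \<and> hd p = \<tau> \<and> last p = \<tau>' \<and> length p = Suc m)"

definition coloring :: "nat \<Rightarrow> nat \<Rightarrow> (vtx \<Rightarrow> nat) \<Rightarrow> bool" where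
  "coloring d k \<Gamma> \<longleftrightarrow> (\<forall>v\<in>verts d k. \<Gamma> v \<le> d) \<and> (\<forall>\<tau>\<in>cells d k. inj_on \<Gamma> \<tau>)"

text \<open>Z/kZ is integer_mod_group k (carrier {0..<k}); Sym(delta sigma) is BijGroup (delta sigma).\<close>
definition k_ordering :: "nat \<Rightarrow> nat \<Rightarrow> (vtx set \<Rightarrow> int \<Rightarrow> vtx set \<Rightarrow> vtx set) \<Rightarrow> bool" where
  "k_ordering d k \<Omega> \<longleftrightarrow> (\<forall>\<sigma>\<in>faces d k.
     \<Omega> \<sigma> \<in> hom (integer_mod_group k) (BijGroup (delta d k \<sigma>)) \<and>
     (\<forall>\<tau>\<in>delta d k \<sigma>. \<forall>\<tau>'\<in>delta d k \<sigma>.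
        \<exists>l\<in>carrier (integer_mod_group k). \<Omega> \<sigma> l \<tau> = \<tau>'))"

text \<open>A word alpha_{j_m}^{l_m} ... alpha_{j_1}^{l_1} is stored as the list
  [(j_1,l_1), ..., (j_m,l_m)] (right-most letter first).
  Elements of G_{d,k} correspond bijectively to reduced words.\<close>
definition reduced :: "nat \<Rightarrow> nat \<Rightarrow> (nat \<times> int) list \<Rightarrow> bool" where
  "reduced d k w \<longleftrightarrow> (\<forall>(j, l)\<in>set w. j \<le> d \<and> 1 \<le> l \<and> l < int k) \<and>
     (\<forall>r. Suc r < length w \<longrightarrow> fst (w ! r) \<noteq> fst (w ! Suc r))"

text \<open>alpha_i^l . tau = Omega_sigma(l) . tau, sigma the face of tau of colour [d] - {i}.\<close>
definition letter_act ::
  "nat \<Rightarrow> (vtx \<Rightarrow> nat) \<Rightarrow> (vtx set \<Rightarrow> int \<Rightarrow> vtx set \<Rightarrow> vtx set) \<Rightarrow> nat \<Rightarrow> int \<Rightarrow> vtx set \<Rightarrow> vtx set" where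
  "letter_act k \<Gamma> \<Omega> i l \<tau> = \<Omega> {v \<in> \<tau>. \<Gamma> v \<noteq> i} (l mod int k) \<tau>"

definition word_act ::
  "nat \<Rightarrow> (vtx \<Rightarrow> nat) \<Rightarrow> (vtx set \<Rightarrow> int \<Rightarrow> vtx set \<Rightarrow> vtx set) \<Rightarrow> (nat \<times> int) list \<Rightarrow> vtx set \<Rightarrow> vtx set" where
  "word_act k \<Gamma> \<Omega> w \<tau> = fold (\<lambda>(i, l) t. letter_act k \<Gamma> \<Omega> i l t) w \<tau>"

end

theory Submission
  imports Defs
begin

text \<open>
  Give every vertex the step of the inductive construction in which it was created and every
  cell the maximal level of its vertices. A cell \<open>\<tau> \<noteq> \<T>\<close> of level \<open>n + 1\<close> was attached
  through exactly one face \<open>\<sigma>\<close>, created in step \<open>n\<close>; \<open>\<delta>(\<sigma>)\<close> consists of the \<open>k - 1\<close> cells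
  attached to \<open>\<sigma>\<close> and one cell of level \<open>n\<close>, its parent. Hence adjacent cells differ in level
  by at most one, and the level of a cell is its distance to the root.

  For a reduced word ending in \<open>\<alpha>\<^sub>j\<^sup>l\<close>, induction shows that \<open>w.\<T>\<close> was attached through its face
  of colour \<open>[d] - {j}\<close>. The next letter has another colour, so it acts through a face created
  together with \<open>w.\<T>\<close>, of which \<open>w.\<T>\<close> is the parent, and a nonzero exponent moves to one of the
  children. So the level of \<open>w.\<T>\<close> is the length of \<open>w\<close>, \<open>w\<close> can be read off from \<open>w.\<T>\<close> letter by
  letter, and every cell is reached. Simple transitivity from an arbitrary base \<open>u.\<T>\<close> follows by
  multiplying normal forms with \<open>u\<close> and its inverse.
\<close>

section \<open>Levels and the tree structure of \<open>T\<^sub>d\<^sub>,\<^sub>k\<close>\<close>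

primrec vtx_level :: "vtx \<Rightarrow> nat" where
  "vtx_level (Root i) = 0"
| "vtx_level (New \<sigma> j) = Suc (Max (fset (fimage vtx_level \<sigma>)))"

definition cell_level :: "vtx set \<Rightarrow> nat" where
  "cell_level \<tau> = Max (vtx_level ` \<tau>)"

lemma vtx_level_New: "finite \<sigma> \<Longrightarrow> vtx_level (New (Abs_fset \<sigma>) j) = Suc (cell_level \<sigma>)"
  by (simp add: Abs_fset_inverse cell_level_def)

lemma finite_root: "finite (root d)"
  by (simp add: root_def)

lemma card_root: "card (root d) = Suc d"
  by (simp add: root_def card_image inj_on_def)

lemma cell_level_root: "cell_level (root d) = 0"
  unfolding cell_level_def root_def by (rule Max_eqI) (auto intro!: image_eqI[of _ _ "Root 0"])

lemma root_minus_in_new_faces: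
  assumes "x \<in> root d"
  shows "root d - {x} \<in> new_faces d k 0"
proof -
  obtain i where "i \<le> d" "x = Root i" using assms by (auto simp: root_def)
  then show ?thesis by (simp only: new_faces.simps) blast
qed

lemma new_faces_props:
  assumes "1 \<le> d" and "\<sigma> \<in> new_faces d k n"
  shows "finite \<sigma>" "card \<sigma> = d" "cell_level \<sigma> = n"
proof -
  have "finite \<sigma> \<and> card \<sigma> = d \<and> (\<forall>u\<in>\<sigma>. vtx_level u \<le> n) \<and> (\<exists>u\<in>\<sigma>. vtx_level u = n)"
    using assms(2)
  proof (induction n arbitrary: \<sigma>)
    case 0
    then obtain i where i: "i \<le> d" "\<sigma> = root d - {Root i}" by auto
    have "Root (if i = 0 then 1 else 0) \<in> \<sigma>" using i assms(1) by (auto simp: root_def)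
    moreover have "card \<sigma> = d" using i card_root[of d] by (simp add: root_def card_Diff_singleton)
    moreover have "\<forall>u\<in>\<sigma>. vtx_level u = 0" using i by (auto simp: root_def)
    ultimately show ?case using i finite_root[of d] by (metis finite_Diff le_refl)
  next
    case (Suc n)
    then obtain \<rho> j w where \<sigma>: "\<sigma> = insert (New (Abs_fset \<rho>) j) (\<rho> - {w})"
      and \<rho>: "\<rho> \<in> new_faces d k n" "w \<in> \<rho>" by auto
    from Suc.IH[OF \<rho>(1)] have IH: "finite \<rho>" "card \<rho> = d" "\<forall>u\<in>\<rho>. vtx_level u \<le> n"
      "\<exists>u\<in>\<rho>. vtx_level u = n" by auto
    have "cell_level \<rho> = n" unfolding cell_level_def using IH by (intro Max_eqI) auto
    then have new: "vtx_level (New (Abs_fset \<rho>) j) = Suc n" using vtx_level_New[OF IH(1)] by simp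
    then have "New (Abs_fset \<rho>) j \<notin> \<rho>" using IH(3) by fastforce
    then have "card \<sigma> = d" using \<sigma> IH \<rho>(2) assms(1) by (simp add: card_Diff_singleton)
    with \<sigma> IH new show ?case by auto
  qed
  then show "finite \<sigma>" "card \<sigma> = d" "cell_level \<sigma> = n"
    unfolding cell_level_def by (auto intro: Max_eqI)
qed

lemma vtx_level_le_cell_level: "finite \<tau> \<Longrightarrow> u \<in> \<tau> \<Longrightarrow> vtx_level u \<le> cell_level \<tau>"
  unfolding cell_level_def by simp

lemma vtx_level_new_vertex:
  "1 \<le> d \<Longrightarrow> \<sigma> \<in> new_faces d k n \<Longrightarrow> vtx_level (New (Abs_fset \<sigma>) j) = Suc n"
  using new_faces_props vtx_level_New by simp

lemma new_vertex_notin_face: "1 \<le> d \<Longrightarrow> \<sigma> \<in> new_faces d k n \<Longrightarrow> New (Abs_fset \<sigma>) j \<notin> \<sigma>"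
  using new_faces_props[of d \<sigma> k n] vtx_level_new_vertex[of d \<sigma> k n j]
    vtx_level_le_cell_level[of \<sigma> "New (Abs_fset \<sigma>) j"] by auto

definition children :: "nat \<Rightarrow> vtx set \<Rightarrow> vtx set set" where
  "children k \<sigma> = (\<lambda>j. insert (New (Abs_fset \<sigma>) j) \<sigma>) ` {1..<k}"

lemma cells_cases: "\<tau> \<in> cells d k \<longleftrightarrow> \<tau> = root d \<or> (\<exists>n. \<exists>\<sigma>\<in>new_faces d k n. \<tau> \<in> children k \<sigma>)"
  unfolding cells_def new_cells_def children_def by blast

lemma root_in_cells: "root d \<in> cells d k"
  by (simp add: cells_def)

lemma root_notin_children: "root d \<notin> children k \<sigma>"
  unfolding children_def root_def by auto

lemma child_props:
  assumes "1 \<le> d" and \<sigma>: "\<sigma> \<in> new_faces d k n" and \<tau>: "\<tau> \<in> children k \<sigma>"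
  shows "\<tau> \<in> cells d k" "\<sigma> \<subseteq> \<tau>" "cell_level \<tau> = Suc n" "finite \<tau>" "card \<tau> = Suc d"
proof -
  obtain j where \<tau>_eq: "\<tau> = insert (New (Abs_fset \<sigma>) j) \<sigma>" using \<tau> children_def by auto
  note props = new_faces_props[OF assms(1) \<sigma>]
  show "\<tau> \<in> cells d k" using \<sigma> \<tau> cells_cases by blast
  show "\<sigma> \<subseteq> \<tau>" "finite \<tau>" using \<tau>_eq props by auto
  show "cell_level \<tau> = Suc n"
    using \<tau>_eq props vtx_level_new_vertex[OF assms(1) \<sigma>] vtx_level_le_cell_level[of \<sigma>]
    unfolding cell_level_def by (intro Max_eqI) (auto simp: cell_level_def le_SucI)
  show "card \<tau> = Suc d" using \<tau>_eq props new_vertex_notin_face[OF assms(1) \<sigma>] by simp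
qed

lemma cell_props:
  assumes "1 \<le> d" and "\<tau> \<in> cells d k"
  shows "finite \<tau>" "card \<tau> = Suc d"
  using assms child_props(4,5) finite_root card_root cells_cases by metis+

lemma card_children:
  assumes "1 \<le> d" and \<sigma>: "\<sigma> \<in> new_faces d k n"
  shows "card (children k \<sigma>) = k - 1"
proof -
  have "inj_on (\<lambda>j. insert (New (Abs_fset \<sigma>) j) \<sigma>) {1..<k}"
    using new_vertex_notin_face[OF assms] by (intro inj_onI) blast
  then show ?thesis unfolding children_def by (simp add: card_image)
qed

lemma top_vertex_of_child:
  assumes "1 \<le> d" and \<sigma>: "\<sigma> \<in> new_faces d k n" and \<tau>: "\<tau> \<in> children k \<sigma>"
    and "u \<in> \<tau>" and "vtx_level u = Suc n"
  obtains j where "u = New (Abs_fset \<sigma>) j" "\<tau> = insert u \<sigma>"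
proof -
  obtain j where \<tau>_eq: "\<tau> = insert (New (Abs_fset \<sigma>) j) \<sigma>" using \<tau> children_def by auto
  have "u \<notin> \<sigma>"
    using assms(5) vtx_level_le_cell_level[of \<sigma> u] new_faces_props[OF assms(1) \<sigma>] by auto
  then show thesis using that \<tau>_eq \<open>u \<in> \<tau>\<close> by blast
qed

lemma children_disjoint:
  assumes "1 \<le> d" and \<sigma>1: "\<sigma>1 \<in> new_faces d k n1" and \<sigma>2: "\<sigma>2 \<in> new_faces d k n2"
    and "\<tau> \<in> children k \<sigma>1" and "\<tau> \<in> children k \<sigma>2"
  shows "\<sigma>1 = \<sigma>2"
proof -
  have "n1 = n2" using child_props(3)[OF assms(1) \<sigma>1 assms(4)] child_props(3)[OF assms(1) \<sigma>2 assms(5)] by simp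
  obtain j1 where u: "New (Abs_fset \<sigma>1) j1 \<in> \<tau>" using assms(4) children_def by auto
  then obtain j2 where "New (Abs_fset \<sigma>1) j1 = New (Abs_fset \<sigma>2) j2"
    using top_vertex_of_child[OF assms(1) \<sigma>2 assms(5) u] vtx_level_new_vertex[OF assms(1) \<sigma>1] \<open>n1 = n2\<close>
    by metis
  then show ?thesis
    using new_faces_props(1)[OF assms(1) \<sigma>1] new_faces_props(1)[OF assms(1) \<sigma>2] by (simp add: Abs_fset_inject)
qed

lemma cell_level_eq_0_imp_root:
  assumes "1 \<le> d" and "\<tau> \<in> cells d k" and "cell_level \<tau> = 0"
  shows "\<tau> = root d"
  using assms child_props(3) cells_cases by (metis nat.distinct(1))

lemma cell_of_level_containing_new_vertex:
  assumes "1 \<le> d" and \<rho>: "\<rho> \<in> new_faces d k m" and "\<tau> \<in> cells d k"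
    and v: "New (Abs_fset \<rho>) j \<in> \<tau>" and "cell_level \<tau> = Suc m"
  shows "\<tau> = insert (New (Abs_fset \<rho>) j) \<rho>"
proof -
  have "\<tau> \<noteq> root d" using assms(5) cell_level_root by auto
  then obtain n \<sigma> where \<sigma>: "\<sigma> \<in> new_faces d k n" and \<tau>: "\<tau> \<in> children k \<sigma>"
    using assms(3) cells_cases by blast
  have "n = m" using child_props(3)[OF assms(1) \<sigma> \<tau>] assms(5) by simp
  then obtain j' where "New (Abs_fset \<rho>) j = New (Abs_fset \<sigma>) j'" "\<tau> = insert (New (Abs_fset \<rho>) j) \<sigma>"
    using top_vertex_of_child[OF assms(1) \<sigma> \<tau> v] vtx_level_new_vertex[OF assms(1) \<rho>] by metis
  then show ?thesis
    using new_faces_props(1)[OF assms(1) \<rho>] new_faces_props(1)[OF assms(1) \<sigma>] by (simp add: Abs_fset_inject)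
qed

lemma child_minus_in_new_faces:
  assumes "1 \<le> d" and \<sigma>: "\<sigma> \<in> new_faces d k n" and \<tau>: "\<tau> \<in> children k \<sigma>"
    and "x \<in> \<tau>" and "\<tau> - {x} \<noteq> \<sigma>"
  shows "\<tau> - {x} \<in> new_faces d k (Suc n)"
proof -
  obtain j where j: "j \<in> {1..<k}" and \<tau>_eq: "\<tau> = insert (New (Abs_fset \<sigma>) j) \<sigma>"
    using \<tau> children_def by auto
  have "x \<in> \<sigma>" "x \<noteq> New (Abs_fset \<sigma>) j"
    using assms(4,5) \<tau>_eq new_vertex_notin_face[OF assms(1) \<sigma>] by auto
  then have "\<tau> - {x} = insert (New (Abs_fset \<sigma>) j) (\<sigma> - {x})" using \<tau>_eq by auto
  then show ?thesis using \<sigma> j \<open>x \<in> \<sigma>\<close> by auto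
qed

lemma faces_in_new_faces:
  assumes "1 \<le> d" and "\<sigma> \<in> faces d k"
  obtains n where "\<sigma> \<in> new_faces d k n"
proof -
  obtain \<tau> x where \<tau>: "\<tau> \<in> cells d k" "x \<in> \<tau>" and \<sigma>_eq: "\<sigma> = \<tau> - {x}"
    using assms(2) faces_def by auto
  show thesis
  proof (cases "\<tau> = root d")
    case True
    then show thesis using that \<tau> \<sigma>_eq root_minus_in_new_faces by blast
  next
    case False
    then obtain n \<rho> where "\<rho> \<in> new_faces d k n" "\<tau> \<in> children k \<rho>" using \<tau>(1) cells_cases by blast
    then show thesis using that \<tau>(2) \<sigma>_eq child_minus_in_new_faces[OF assms(1)] by metis
  qed
qed

lemma cell_level_mono: "finite \<tau> \<Longrightarrow> \<sigma> \<subseteq> \<tau> \<Longrightarrow> \<sigma> \<noteq> {} \<Longrightarrow> cell_level \<sigma> \<le> cell_level \<tau>"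
  unfolding cell_level_def by (simp add: Max_mono image_mono)

lemma non_child_cell_level:
  assumes "1 \<le> d" and \<sigma>: "\<sigma> \<in> new_faces d k n" and "\<tau> \<in> cells d k" and "\<sigma> \<subseteq> \<tau>"
    and "\<tau> \<notin> children k \<sigma>"
  shows "cell_level \<tau> = n"
proof (rule antisym)
  note \<sigma>_props = new_faces_props[OF assms(1) \<sigma>]
  show "cell_level \<tau> \<le> n"
  proof (cases "\<tau> = root d")
    case False
    then obtain m \<rho> where \<rho>: "\<rho> \<in> new_faces d k m" and \<tau>: "\<tau> \<in> children k \<rho>"
      using assms(3) cells_cases by blast
    then obtain j where \<tau>_eq: "\<tau> = insert (New (Abs_fset \<rho>) j) \<rho>" using children_def by auto
    have "New (Abs_fset \<rho>) j \<in> \<sigma>"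
    proof (rule ccontr)
      assume "New (Abs_fset \<rho>) j \<notin> \<sigma>"
      then have "\<sigma> \<subseteq> \<rho>" using assms(4) \<tau>_eq by auto
      then have "\<sigma> = \<rho>"
        using card_subset_eq[OF new_faces_props(1)[OF assms(1) \<rho>]] new_faces_props(2)[OF assms(1) \<rho>]
          \<sigma>_props(2) by simp
      then show False using assms(5) \<tau> by simp
    qed
    then have "vtx_level (New (Abs_fset \<rho>) j) \<le> n"
      using vtx_level_le_cell_level[OF \<sigma>_props(1)] \<sigma>_props(3) by fastforce
    then show ?thesis
      using vtx_level_new_vertex[OF assms(1) \<rho>] child_props(3)[OF assms(1) \<rho> \<tau>] by simp
  qed (simp add: cell_level_root)
  have "\<sigma> \<noteq> {}" using \<sigma>_props assms(1) by auto
  then show "n \<le> cell_level \<tau>"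
    using cell_level_mono[OF cell_props(1)[OF assms(1,3)] assms(4)] \<sigma>_props(3) by simp
qed

lemma unique_cell_of_level_above:
  assumes "1 \<le> d" and \<sigma>: "\<sigma> \<in> new_faces d k n"
  obtains \<rho> where "\<rho> \<in> delta d k \<sigma>" "cell_level \<rho> = n"
    "\<And>\<tau>. \<tau> \<in> delta d k \<sigma> \<Longrightarrow> cell_level \<tau> = n \<Longrightarrow> \<tau> = \<rho>"
proof (cases n)
  case 0
  then have "root d \<in> delta d k \<sigma>" using \<sigma> root_in_cells unfolding delta_def by auto
  moreover have "\<tau> = root d" if "\<tau> \<in> delta d k \<sigma>" "cell_level \<tau> = n" for \<tau>
    using that 0 cell_level_eq_0_imp_root[OF assms(1)] unfolding delta_def by blast
  ultimately show thesis using that 0 cell_level_root by blast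
next
  case (Suc m)
  then obtain \<rho> j w where \<sigma>_eq: "\<sigma> = insert (New (Abs_fset \<rho>) j) (\<rho> - {w})"
    and \<rho>: "\<rho> \<in> new_faces d k m" and j: "j \<in> {1..<k}" using \<sigma> by auto
  have child: "insert (New (Abs_fset \<rho>) j) \<rho> \<in> children k \<rho>" using j children_def by auto
  show thesis
  proof (rule that)
    show "insert (New (Abs_fset \<rho>) j) \<rho> \<in> delta d k \<sigma>"
      using \<sigma>_eq child_props(1)[OF assms(1) \<rho> child] unfolding delta_def by auto
    show "cell_level (insert (New (Abs_fset \<rho>) j) \<rho>) = n"
      using child_props(3)[OF assms(1) \<rho> child] Suc by simp
    show "\<tau> = insert (New (Abs_fset \<rho>) j) \<rho>" if "\<tau> \<in> delta d k \<sigma>" "cell_level \<tau> = n" for \<tau>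
    proof (rule cell_of_level_containing_new_vertex[OF assms(1) \<rho>])
      show "\<tau> \<in> cells d k" "New (Abs_fset \<rho>) j \<in> \<tau>" using that(1) \<sigma>_eq unfolding delta_def by auto
    qed (use that(2) Suc in simp)
  qed
qed

lemma new_face_parent:
  assumes "1 \<le> d" and \<sigma>: "\<sigma> \<in> new_faces d k n"
  obtains \<rho> where "\<rho> \<in> delta d k \<sigma>" "cell_level \<rho> = n" "delta d k \<sigma> = insert \<rho> (children k \<sigma>)"
proof -
  obtain \<rho> where \<rho>: "\<rho> \<in> delta d k \<sigma>" "cell_level \<rho> = n"
    and unique: "\<And>\<tau>. \<tau> \<in> delta d k \<sigma> \<Longrightarrow> cell_level \<tau> = n \<Longrightarrow> \<tau> = \<rho>"
    using unique_cell_of_level_above[OF assms] by blast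
  have "delta d k \<sigma> \<subseteq> insert \<rho> (children k \<sigma>)"
  proof
    fix \<tau> assume \<tau>: "\<tau> \<in> delta d k \<sigma>"
    show "\<tau> \<in> insert \<rho> (children k \<sigma>)"
    proof (cases "\<tau> \<in> children k \<sigma>")
      case False
      then have "cell_level \<tau> = n" using \<tau> non_child_cell_level[OF assms] unfolding delta_def by simp
      then show ?thesis using unique[OF \<tau>] by simp
    qed simp
  qed
  moreover have "insert \<rho> (children k \<sigma>) \<subseteq> delta d k \<sigma>"
    using \<rho>(1) child_props(1,2)[OF assms] unfolding delta_def by blast
  ultimately show thesis using that \<rho> by blast
qed

lemma card_delta:
  assumes "1 \<le> d" and "1 \<le> k" and "\<sigma> \<in> faces d k"
  shows "finite (delta d k \<sigma>)" "card (delta d k \<sigma>) = k"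
proof -
  obtain n where \<sigma>: "\<sigma> \<in> new_faces d k n" using faces_in_new_faces[OF assms(1,3)] by blast
  obtain \<rho> where \<rho>: "cell_level \<rho> = n" and delta_eq: "delta d k \<sigma> = insert \<rho> (children k \<sigma>)"
    using new_face_parent[OF assms(1) \<sigma>] by blast
  have "\<rho> \<notin> children k \<sigma>"
  proof
    assume "\<rho> \<in> children k \<sigma>"
    with \<rho> show False using child_props(3)[OF assms(1) \<sigma>] by simp
  qed
  moreover have "finite (children k \<sigma>)" by (simp add: children_def)
  ultimately show "finite (delta d k \<sigma>)" "card (delta d k \<sigma>) = k"
    unfolding delta_eq using card_children[OF assms(1) \<sigma>] assms(2) by simp_all
qed

lemma face_of_child:
  assumes "1 \<le> d" and \<sigma>: "\<sigma> \<in> new_faces d k n" and \<tau>: "\<tau> \<in> children k \<sigma>"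
  shows "\<sigma> \<in> faces d k"
proof -
  obtain j where "\<tau> = insert (New (Abs_fset \<sigma>) j) \<sigma>" using \<tau> children_def by auto
  then have "\<sigma> = \<tau> - {New (Abs_fset \<sigma>) j}" "New (Abs_fset \<sigma>) j \<in> \<tau>"
    using new_vertex_notin_face[OF assms(1) \<sigma>] by auto
  then show ?thesis using child_props(1)[OF assms] unfolding faces_def by blast
qed

lemma parent_unique:
  assumes "1 \<le> d" and \<sigma>: "\<sigma> \<in> new_faces d k n"
    and "\<tau>1 \<in> delta d k \<sigma>" "\<tau>1 \<notin> children k \<sigma>" "\<tau>2 \<in> delta d k \<sigma>" "\<tau>2 \<notin> children k \<sigma>"
  shows "\<tau>1 = \<tau>2"
  using new_face_parent[OF assms(1,2)] assms(3-6) by (metis insertE)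

lemma cell_level_Suc_imp_child:
  assumes "1 \<le> d" and "\<tau> \<in> cells d k" and "cell_level \<tau> = Suc n"
  obtains \<rho> where "\<rho> \<in> new_faces d k n" "\<tau> \<in> children k \<rho>"
proof -
  have "\<tau> \<noteq> root d" using assms(3) cell_level_root by auto
  then obtain m \<rho> where \<rho>: "\<rho> \<in> new_faces d k m" "\<tau> \<in> children k \<rho>" using assms(2) cells_cases by blast
  moreover have "m = n" using child_props(3)[OF assms(1) \<rho>] assms(3) by simp
  ultimately show thesis using that by blast
qed

lemma cell_level_delta:
  assumes "1 \<le> d" and \<sigma>: "\<sigma> \<in> new_faces d k n" and "\<tau> \<in> delta d k \<sigma>"
  shows "n \<le> cell_level \<tau>" "cell_level \<tau> \<le> Suc n"
proof -
  obtain \<rho> where "cell_level \<rho> = n" "delta d k \<sigma> = insert \<rho> (children k \<sigma>)"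
    using new_face_parent[OF assms(1,2)] by blast
  then have "cell_level \<tau> = n \<or> cell_level \<tau> = Suc n"
    using assms(3) child_props(3)[OF assms(1,2)] by auto
  then show "n \<le> cell_level \<tau>" "cell_level \<tau> \<le> Suc n" by auto
qed

lemma new_face_eq_minus_vertex:
  assumes "1 \<le> d" and \<sigma>: "\<sigma> \<in> new_faces d k n" and "\<tau> \<in> delta d k \<sigma>"
  obtains y where "y \<in> \<tau>" "\<sigma> = \<tau> - {y}"
proof -
  have \<tau>: "\<tau> \<in> cells d k" "\<sigma> \<subseteq> \<tau>" using assms(3) delta_def by auto
  have "card \<sigma> < card \<tau>" using new_faces_props(2)[OF assms(1,2)] cell_props(2)[OF assms(1) \<tau>(1)] by simp
  then obtain y where y: "y \<in> \<tau>" "y \<notin> \<sigma>" using \<tau>(2) by (metis less_irrefl subsetI subset_antisym)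
  then have "\<sigma> \<subseteq> \<tau> - {y}" using \<tau>(2) by auto
  moreover have "card (\<tau> - {y}) = card \<sigma>"
    using y new_faces_props(2)[OF assms(1,2)] cell_props[OF assms(1) \<tau>(1)] by simp
  ultimately have "\<sigma> = \<tau> - {y}" using cell_props(1)[OF assms(1) \<tau>(1)] by (simp add: card_subset_eq)
  with y that show thesis by blast
qed

lemma cell_face_cases:
  assumes "1 \<le> d" and "\<tau> \<in> cells d k" and "x \<in> \<tau>"
  shows "\<tau> - {x} \<in> new_faces d k (cell_level \<tau>) \<or> (\<exists>m. \<tau> - {x} \<in> new_faces d k m \<and> \<tau> \<in> children k (\<tau> - {x}))"
proof (cases "\<tau> = root d")
  case True
  then show ?thesis using assms(3) root_minus_in_new_faces cell_level_root by simp
next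
  case False
  then obtain m \<rho> where \<rho>: "\<rho> \<in> new_faces d k m" "\<tau> \<in> children k \<rho>" using assms(2) cells_cases by blast
  then show ?thesis
    using child_minus_in_new_faces[OF assms(1) \<rho> assms(3)] child_props(3)[OF assms(1) \<rho>] by metis
qed

section \<open>Distance to the root in the line graph\<close>

lemma line_walk_Cons:
  "line_walk d k (\<tau> # p) \<longleftrightarrow> (if p = [] then \<tau> \<in> cells d k else line_adj d k \<tau> (hd p) \<and> line_walk d k p)"
proof (cases p)
  case (Cons \<tau>' p')
  have "(\<forall>i. Suc i < length (\<tau> # p) \<longrightarrow> line_adj d k ((\<tau> # p) ! i) ((\<tau> # p) ! Suc i)) \<longleftrightarrow>
      line_adj d k \<tau> \<tau>' \<and> (\<forall>i. Suc i < length p \<longrightarrow> line_adj d k (p ! i) (p ! Suc i))"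
    unfolding Cons by (auto simp: nth_Cons split: nat.split)
  moreover have "line_adj d k \<tau> \<tau>' \<Longrightarrow> \<tau> \<in> cells d k" by (simp add: line_adj_def)
  ultimately show ?thesis unfolding line_walk_def Cons by auto
qed (simp add: line_walk_def)

lemma line_adj_cell_level:
  assumes "1 \<le> d" and "line_adj d k \<tau> \<tau>'"
  shows "cell_level \<tau> \<le> Suc (cell_level \<tau>')"
proof -
  obtain \<sigma> where "\<sigma> \<in> faces d k" "\<tau> \<in> delta d k \<sigma>" "\<tau>' \<in> delta d k \<sigma>"
    using assms(2) unfolding line_adj_def delta_def by blast
  moreover obtain n where "\<sigma> \<in> new_faces d k n" using faces_in_new_faces[OF assms(1) calculation(1)] .
  ultimately have "cell_level \<tau> \<le> Suc n" "n \<le> cell_level \<tau>'" using cell_level_delta[OF assms(1)] by blast+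
  then show ?thesis by simp
qed

lemma line_walk_cell_level:
  assumes "1 \<le> d"
  shows "line_walk d k p \<Longrightarrow> cell_level (hd p) \<le> cell_level (last p) + (length p - 1)"
proof (induction p)
  case (Cons \<tau> p)
  show ?case
  proof (cases "p = []")
    case False
    then have "line_adj d k \<tau> (hd p)" "line_walk d k p" using Cons.prems line_walk_Cons by auto
    then have "cell_level \<tau> \<le> Suc (cell_level (last p) + (length p - 1))"
      using Cons.IH line_adj_cell_level[OF assms] by (meson Suc_le_mono le_trans)
    then show ?thesis using False by (cases p) auto
  qed simp
qed (simp add: line_walk_def)

lemma line_walk_to_root:
  assumes "1 \<le> d" and "\<tau> \<in> cells d k"
  shows "\<exists>p. line_walk d k p \<and> hd p = \<tau> \<and> last p = root d \<and> length p = Suc (cell_level \<tau>)"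
  using assms(2)
proof (induction "cell_level \<tau>" arbitrary: \<tau>)
  case 0
  then have "\<tau> = root d" using cell_level_eq_0_imp_root[OF assms(1)] by simp
  then show ?case using 0 by (intro exI[of _ "[\<tau>]"]) (simp add: line_walk_def)
next
  case (Suc n)
  obtain \<rho> where \<rho>: "\<rho> \<in> new_faces d k n" "\<tau> \<in> children k \<rho>"
    using cell_level_Suc_imp_child[OF assms(1) Suc.prems Suc.hyps(2)[symmetric]] .
  obtain \<tau>' where \<tau>': "\<tau>' \<in> delta d k \<rho>" "cell_level \<tau>' = n"
    using new_face_parent[OF assms(1) \<rho>(1)] .
  then obtain p where p: "line_walk d k p" "hd p = \<tau>'" "last p = root d" "length p = Suc n"
    using Suc.hyps(1) unfolding delta_def by blast
  have "line_adj d k \<tau> \<tau>'"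
    using \<tau>' child_props[OF assms(1) \<rho>] face_of_child[OF assms(1) \<rho>] Suc.hyps(2)
    unfolding line_adj_def delta_def by auto
  moreover have "p \<noteq> []" using p(4) by auto
  ultimately have "line_walk d k (\<tau> # p)" using p(1,2) by (simp add: line_walk_Cons)
  then show ?case using p \<open>p \<noteq> []\<close> Suc.hyps(2) by (intro exI[of _ "\<tau> # p"]) simp
qed

lemma line_dist_root:
  assumes "1 \<le> d" and "\<tau> \<in> cells d k"
  shows "line_dist d k \<tau> (root d) = cell_level \<tau>"
  unfolding line_dist_def
proof (rule Least_equality)
  show "\<exists>p. line_walk d k p \<and> hd p = \<tau> \<and> last p = root d \<and> length p = Suc (cell_level \<tau>)"
    using line_walk_to_root[OF assms] .
  show "cell_level \<tau> \<le> m" if "\<exists>p. line_walk d k p \<and> hd p = \<tau> \<and> last p = root d \<and> length p = Suc m" for m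
    using that line_walk_cell_level[OF assms(1)] cell_level_root by fastforce
qed

section \<open>Normal forms in \<open>G\<^sub>d\<^sub>,\<^sub>k\<close>\<close>

lemma reduced_iff:
  "reduced d k w \<longleftrightarrow>
     (\<forall>x\<in>set w. fst x \<le> d \<and> 1 \<le> snd x \<and> snd x < int k) \<and> successively (\<lambda>x y. fst x \<noteq> fst y) w"
  unfolding reduced_def successively_conv_nth by auto

lemma reduced_snoc:
  "reduced d k (q @ [x]) \<longleftrightarrow>
     reduced d k q \<and> fst x \<le> d \<and> 1 \<le> snd x \<and> snd x < int k \<and> (q \<noteq> [] \<longrightarrow> fst (last q) \<noteq> fst x)"
  by (auto simp: reduced_iff successively_append_iff)

lemma reduced_Cons: "reduced d k (x # q) \<Longrightarrow> fst x \<le> d \<and> reduced d k q"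
  by (auto simp: reduced_iff successively_Cons)

lemma reduced_butlast: "reduced d k q \<Longrightarrow> reduced d k (butlast q)"
  using reduced_snoc[of d k "butlast q" "last q"] by (cases "q = []") auto

definition snoc_letter :: "nat \<Rightarrow> (nat \<times> int) list \<Rightarrow> nat \<Rightarrow> int \<Rightarrow> (nat \<times> int) list" where
  "snoc_letter k q i e = (if e mod int k = 0 then q else q @ [(i, e mod int k)])"

definition mult_letter :: "nat \<Rightarrow> (nat \<times> int) list \<Rightarrow> nat \<times> int \<Rightarrow> (nat \<times> int) list" where
  "mult_letter k q x =
     (if q \<noteq> [] \<and> fst (last q) = fst x then snoc_letter k (butlast q) (fst x) (snd (last q) + snd x)
      else snoc_letter k q (fst x) (snd x))"

definition mult_word :: "nat \<Rightarrow> (nat \<times> int) list \<Rightarrow> (nat \<times> int) list \<Rightarrow> (nat \<times> int) list" where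
  "mult_word k p x = fold (\<lambda>y q. mult_letter k q y) x p"

text \<open>Exponents \<open>k - l\<close> rather than \<open>-l\<close> keep the inverse of a normal form a normal form.\<close>
definition word_inv :: "nat \<Rightarrow> (nat \<times> int) list \<Rightarrow> (nat \<times> int) list" where
  "word_inv k u = rev (map (\<lambda>(i, l). (i, int k - l)) u)"

lemma mult_word_Nil [simp]: "mult_word k p [] = p"
  by (simp add: mult_word_def)

lemma mult_word_Cons [simp]: "mult_word k p (y # x) = mult_word k (mult_letter k p y) x"
  by (simp add: mult_word_def)

lemma reduced_snoc_letter:
  assumes "reduced d k q" and "q = [] \<or> fst (last q) \<noteq> i" and "i \<le> d" and "1 \<le> k"
  shows "reduced d k (snoc_letter k q i e)"
proof (cases "e mod int k = 0")
  case False
  then have "1 \<le> e mod int k" "e mod int k < int k"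
    using assms(4) pos_mod_sign[of "int k" e] pos_mod_bound[of "int k" e] by linarith+
  then show ?thesis using False assms reduced_snoc[of d k q "(i, e mod int k)"] by (auto simp: snoc_letter_def)
qed (simp add: snoc_letter_def assms)

lemma reduced_mult_letter:
  assumes "reduced d k q" and "fst x \<le> d" and "1 \<le> k"
  shows "reduced d k (mult_letter k q x)"
proof (cases "q \<noteq> [] \<and> fst (last q) = fst x")
  case True
  then have "butlast q = [] \<or> fst (last (butlast q)) \<noteq> fst x"
    using assms(1) reduced_snoc[of d k "butlast q" "last q"] by auto
  then show ?thesis
    using True reduced_snoc_letter reduced_butlast assms unfolding mult_letter_def by simp
qed (use reduced_snoc_letter assms in \<open>auto simp: mult_letter_def\<close>)

lemma reduced_mult_word:
  "reduced d k p \<Longrightarrow> reduced d k x \<Longrightarrow> 1 \<le> k \<Longrightarrow> reduced d k (mult_word k p x)"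
proof (induction x arbitrary: p)
  case (Cons y x)
  then show ?case using reduced_Cons[OF Cons.prems(2)] reduced_mult_letter by simp
qed simp

lemma reduced_word_inv: "reduced d k u \<Longrightarrow> reduced d k (word_inv k u)"
  unfolding reduced_iff word_inv_def successively_rev successively_map
  by (auto simp: split_beta elim: successively_mono)

lemma mult_word_inv_left: "mult_word k (word_inv k u) u = []"
proof (induction u)
  case (Cons x u)
  have "mult_letter k (word_inv k u @ [(fst x, int k - snd x)]) x = word_inv k u"
    by (simp add: mult_letter_def snoc_letter_def)
  with Cons show ?case by (simp add: word_inv_def split_beta)
qed (simp add: word_inv_def)

lemma mult_word_inv_right: "mult_word k u (word_inv k u) = []"
proof (induction u rule: rev_induct)
  case (snoc x u)
  have "mult_letter k (u @ [x]) (fst x, int k - snd x) = u"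
    by (simp add: mult_letter_def snoc_letter_def)
  with snoc show ?case by (simp add: word_inv_def split_beta)
qed (simp add: word_inv_def)

section \<open>The action on cells\<close>

definition opp_face :: "(vtx \<Rightarrow> nat) \<Rightarrow> vtx set \<Rightarrow> nat \<Rightarrow> vtx set" where
  "opp_face \<Gamma> \<tau> i = {v \<in> \<tau>. \<Gamma> v \<noteq> i}"

locale arboreal_action =
  fixes d k :: nat and \<Gamma> :: "vtx \<Rightarrow> nat" and \<Omega> :: "vtx set \<Rightarrow> int \<Rightarrow> vtx set \<Rightarrow> vtx set"
  assumes one_le_d: "1 \<le> d" and one_le_k: "1 \<le> k"
    and coloring: "coloring d k \<Gamma>" and ordering: "k_ordering d k \<Omega>"
begin

lemma colors_of_cell: "\<tau> \<in> cells d k \<Longrightarrow> \<Gamma> ` \<tau> = {0..d}"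
  using coloring cell_props[OF one_le_d] card_image[of \<Gamma> \<tau>]
  by (intro card_subset_eq) (auto simp: coloring_def verts_def)

lemma opp_face_eq: "\<tau> \<in> cells d k \<Longrightarrow> x \<in> \<tau> \<Longrightarrow> opp_face \<Gamma> \<tau> (\<Gamma> x) = \<tau> - {x}"
  using coloring unfolding coloring_def opp_face_def by (auto dest: inj_onD)

lemma opp_face_props:
  assumes "\<tau> \<in> cells d k" and "i \<le> d"
  shows "opp_face \<Gamma> \<tau> i \<in> faces d k" "\<tau> \<in> delta d k (opp_face \<Gamma> \<tau> i)" "card (opp_face \<Gamma> \<tau> i) = d"
proof -
  obtain x where x: "x \<in> \<tau>" "\<Gamma> x = i" using colors_of_cell[OF assms(1)] assms(2) by force
  then have eq: "opp_face \<Gamma> \<tau> i = \<tau> - {x}" using opp_face_eq[OF assms(1)] by blast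
  show "opp_face \<Gamma> \<tau> i \<in> faces d k" using eq x assms(1) unfolding faces_def by blast
  show "\<tau> \<in> delta d k (opp_face \<Gamma> \<tau> i)" using eq assms(1) unfolding delta_def by auto
  show "card (opp_face \<Gamma> \<tau> i) = d" using eq x cell_props[OF one_le_d assms(1)] by simp
qed

lemma opp_face_of_delta:
  assumes "\<tau> \<in> cells d k" and "i \<le> d" and "\<tau>' \<in> delta d k (opp_face \<Gamma> \<tau> i)"
  shows "opp_face \<Gamma> \<tau>' i = opp_face \<Gamma> \<tau> i"
proof -
  have \<tau>': "\<tau>' \<in> cells d k" "opp_face \<Gamma> \<tau> i \<subseteq> \<tau>'" using assms(3) unfolding delta_def by auto
  then have "opp_face \<Gamma> \<tau> i \<subseteq> opp_face \<Gamma> \<tau>' i" unfolding opp_face_def by auto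
  then show ?thesis
    using card_subset_eq[OF cell_props(1)[OF one_le_d \<tau>'(1), THEN finite_subset[rotated]]]
      opp_face_props(3)[OF \<tau>'(1) assms(2)] opp_face_props(3)[OF assms(1,2)]
    by (metis Collect_subset opp_face_def)
qed

lemma opp_face_inj:
  assumes "\<tau> \<in> cells d k" and "i \<le> d" and "opp_face \<Gamma> \<tau> i = opp_face \<Gamma> \<tau> j"
  shows "i = j"
proof -
  obtain x where "x \<in> \<tau>" "\<Gamma> x = i" using colors_of_cell[OF assms(1)] assms(2) by force
  then show ?thesis using assms(3) unfolding opp_face_def by blast
qed

lemma ordering_hom: "\<sigma> \<in> faces d k \<Longrightarrow> \<Omega> \<sigma> \<in> hom (integer_mod_group k) (BijGroup (delta d k \<sigma>))"
  using ordering by (simp add: k_ordering_def)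

lemma ordering_bij: "\<sigma> \<in> faces d k \<Longrightarrow> l \<in> {0..<int k} \<Longrightarrow> \<Omega> \<sigma> l \<in> Bij (delta d k \<sigma>)"
  using ordering_hom[of \<sigma>] one_le_k unfolding hom_def BijGroup_def
  by (auto simp: carrier_integer_mod_group)

lemma ordering_zero:
  assumes "\<sigma> \<in> faces d k" and "\<tau> \<in> delta d k \<sigma>"
  shows "\<Omega> \<sigma> 0 \<tau> = \<tau>"
proof -
  have "\<Omega> \<sigma> \<one>\<^bsub>integer_mod_group k\<^esub> = \<one>\<^bsub>BijGroup (delta d k \<sigma>)\<^esub>"
    using hom_one[OF ordering_hom[OF assms(1)] group_integer_mod_group group_BijGroup] .
  then show ?thesis using assms(2) by (simp add: BijGroup_def)
qed

lemma ordering_add: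
  assumes "\<sigma> \<in> faces d k" and "a \<in> {0..<int k}" and "b \<in> {0..<int k}" and "\<tau> \<in> delta d k \<sigma>"
  shows "\<Omega> \<sigma> a (\<Omega> \<sigma> b \<tau>) = \<Omega> \<sigma> ((a + b) mod int k) \<tau>"
proof -
  have "\<Omega> \<sigma> (a \<otimes>\<^bsub>integer_mod_group k\<^esub> b) = \<Omega> \<sigma> a \<otimes>\<^bsub>BijGroup (delta d k \<sigma>)\<^esub> \<Omega> \<sigma> b"
    using hom_mult[OF ordering_hom[OF assms(1)]] assms(2,3) one_le_k
    by (simp add: carrier_integer_mod_group)
  then have "\<Omega> \<sigma> ((a + b) mod int k) = compose (delta d k \<sigma>) (\<Omega> \<sigma> a) (\<Omega> \<sigma> b)"
    using ordering_bij[OF assms(1)] assms(2,3) by (simp add: BijGroup_def)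
  then show ?thesis using assms(4) by (simp add: compose_def)
qed

lemma ordering_onto:
  "\<sigma> \<in> faces d k \<Longrightarrow> \<tau> \<in> delta d k \<sigma> \<Longrightarrow> \<tau>' \<in> delta d k \<sigma> \<Longrightarrow> \<exists>l\<in>{0..<int k}. \<Omega> \<sigma> l \<tau> = \<tau>'"
  using ordering one_le_k by (auto simp: k_ordering_def carrier_integer_mod_group)

text \<open>Transitivity on the \<open>k\<close> cells of \<open>delta \<sigma>\<close> forces the orbit map to be injective.\<close>
lemma ordering_inj:
  assumes "\<sigma> \<in> faces d k" and "\<tau> \<in> delta d k \<sigma>"
  shows "inj_on (\<lambda>l. \<Omega> \<sigma> l \<tau>) {0..<int k}"
proof (rule eq_card_imp_inj_on)
  have "(\<lambda>l. \<Omega> \<sigma> l \<tau>) ` {0..<int k} = delta d k \<sigma>"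
    using funcset_mem[OF Bij_imp_funcset[OF ordering_bij[OF assms(1)]] assms(2)] ordering_onto[OF assms]
    by auto
  then show "card ((\<lambda>l. \<Omega> \<sigma> l \<tau>) ` {0..<int k}) = card {0..<int k}"
    using card_delta[OF one_le_d one_le_k assms(1)] by simp
qed simp

abbreviation lact :: "nat \<Rightarrow> int \<Rightarrow> vtx set \<Rightarrow> vtx set" where
  "lact \<equiv> letter_act k \<Gamma> \<Omega>"

abbreviation wact :: "(nat \<times> int) list \<Rightarrow> vtx set \<Rightarrow> vtx set" where
  "wact \<equiv> word_act k \<Gamma> \<Omega>"

lemma letter_act_opp_face: "lact i l \<tau> = \<Omega> (opp_face \<Gamma> \<tau> i) (l mod int k) \<tau>"
  by (simp add: letter_act_def opp_face_def)

lemma mod_k_in_range: "l mod int k \<in> {0..<int k}"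
  using one_le_k by simp

lemma letter_act_in_delta:
  assumes "\<tau> \<in> cells d k" and "i \<le> d"
  shows "lact i l \<tau> \<in> delta d k (opp_face \<Gamma> \<tau> i)"
  unfolding letter_act_opp_face
  using funcset_mem[OF Bij_imp_funcset[OF ordering_bij[OF opp_face_props(1)[OF assms] mod_k_in_range]]
      opp_face_props(2)[OF assms]] .

lemma letter_act_in_cells: "\<tau> \<in> cells d k \<Longrightarrow> i \<le> d \<Longrightarrow> lact i l \<tau> \<in> cells d k"
  using letter_act_in_delta delta_def by blast

lemma opp_face_letter_act: "\<tau> \<in> cells d k \<Longrightarrow> i \<le> d \<Longrightarrow> opp_face \<Gamma> (lact i l \<tau>) i = opp_face \<Gamma> \<tau> i"
  using opp_face_of_delta letter_act_in_delta by blast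

lemma letter_act_add:
  assumes "\<tau> \<in> cells d k" and "i \<le> d"
  shows "lact i a (lact i b \<tau>) = lact i (b + a) \<tau>"
proof -
  have "lact i a (lact i b \<tau>) = \<Omega> (opp_face \<Gamma> \<tau> i) (a mod int k) (\<Omega> (opp_face \<Gamma> \<tau> i) (b mod int k) \<tau>)"
    using opp_face_letter_act[OF assms] by (simp add: letter_act_opp_face)
  also have "\<dots> = \<Omega> (opp_face \<Gamma> \<tau> i) ((a mod int k + b mod int k) mod int k) \<tau>"
    using ordering_add[OF opp_face_props(1)[OF assms] mod_k_in_range mod_k_in_range opp_face_props(2)[OF assms]] .
  finally show ?thesis by (simp add: letter_act_opp_face mod_add_eq add.commute)
qed

lemma letter_act_0: "\<tau> \<in> cells d k \<Longrightarrow> i \<le> d \<Longrightarrow> lact i 0 \<tau> = \<tau>"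
  using ordering_zero opp_face_props(1,2) by (simp add: letter_act_opp_face)

lemma letter_act_eq_iff:
  assumes "\<tau> \<in> cells d k" and "i \<le> d"
  shows "lact i a \<tau> = lact i b \<tau> \<longleftrightarrow> a mod int k = b mod int k"
  using inj_on_eq_iff[OF ordering_inj[OF opp_face_props(1,2)[OF assms]] mod_k_in_range mod_k_in_range]
  by (simp add: letter_act_opp_face)

lemma letter_act_onto:
  assumes "\<tau> \<in> cells d k" and "i \<le> d" and "\<tau>' \<in> delta d k (opp_face \<Gamma> \<tau> i)"
  obtains l where "lact i l \<tau> = \<tau>'"
proof -
  obtain l where "l \<in> {0..<int k}" "\<Omega> (opp_face \<Gamma> \<tau> i) l \<tau> = \<tau>'"
    using ordering_onto[OF opp_face_props(1,2)[OF assms(1,2)] assms(3)] by blast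
  then show thesis using that[of l] by (simp add: letter_act_opp_face)
qed

lemma word_act_Nil [simp]: "wact [] \<tau> = \<tau>"
  by (simp add: word_act_def)

lemma word_act_append [simp]: "wact (x @ y) \<tau> = wact y (wact x \<tau>)"
  by (simp add: word_act_def)

lemma word_act_single [simp]: "wact [(i, l)] \<tau> = lact i l \<tau>"
  by (simp add: word_act_def)

lemma word_act_in_cells: "\<tau> \<in> cells d k \<Longrightarrow> reduced d k w \<Longrightarrow> wact w \<tau> \<in> cells d k"
proof (induction w rule: rev_induct)
  case (snoc x w)
  then show ?case using reduced_snoc[of d k w x] letter_act_in_cells by (cases x) simp
qed simp

lemma word_act_snoc_letter:
  assumes "\<tau> \<in> cells d k" and "reduced d k q" and "i \<le> d"
  shows "wact (snoc_letter k q i e) \<tau> = lact i e (wact q \<tau>)"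
proof (cases "e mod int k = 0")
  case True
  then have "lact i e (wact q \<tau>) = lact i 0 (wact q \<tau>)"
    using letter_act_eq_iff word_act_in_cells assms by simp
  then show ?thesis using True letter_act_0 word_act_in_cells assms by (simp add: snoc_letter_def)
qed (simp add: snoc_letter_def letter_act_def)

lemma word_act_mult_letter:
  assumes "\<tau> \<in> cells d k" and "reduced d k q" and "fst x \<le> d"
  shows "wact (mult_letter k q x) \<tau> = lact (fst x) (snd x) (wact q \<tau>)"
proof (cases "q \<noteq> [] \<and> fst (last q) = fst x")
  case True
  then have q: "q = butlast q @ [(fst x, snd (last q))]"
    by (metis append_butlast_last_id prod.collapse)
  have "wact (mult_letter k q x) \<tau> = lact (fst x) (snd (last q) + snd x) (wact (butlast q) \<tau>)"
    using True word_act_snoc_letter[OF assms(1) reduced_butlast[OF assms(2)] assms(3)]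
    by (simp add: mult_letter_def)
  also have "\<dots> = lact (fst x) (snd x) (lact (fst x) (snd (last q)) (wact (butlast q) \<tau>))"
    using letter_act_add[OF word_act_in_cells[OF assms(1) reduced_butlast[OF assms(2)]] assms(3)] by simp
  also have "\<dots> = lact (fst x) (snd x) (wact q \<tau>)"
    by (subst (2) q) simp
  finally show ?thesis .
next
  case False
  then have "mult_letter k q x = snoc_letter k q (fst x) (snd x)" by (auto simp: mult_letter_def)
  then show ?thesis using word_act_snoc_letter[OF assms] by simp
qed

lemma word_act_mult_word:
  assumes "\<tau> \<in> cells d k"
  shows "reduced d k p \<Longrightarrow> reduced d k x \<Longrightarrow> wact (mult_word k p x) \<tau> = wact x (wact p \<tau>)"
proof (induction x arbitrary: p)
  case (Cons y x)
  then have "wact (mult_word k p (y # x)) \<tau> = wact x (wact (mult_letter k p y) \<tau>)"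
    using reduced_Cons reduced_mult_letter one_le_k by simp
  also have "\<dots> = wact (y # x) (wact p \<tau>)"
    using word_act_mult_letter[OF assms Cons.prems(1)] reduced_Cons[OF Cons.prems(2)]
    by (cases y) (simp add: word_act_def)
  finally show ?case .
qed simp

text \<open>The down face of \<open>w.\<T>\<close> is the face through which it was attached; every other face of
  \<open>w.\<T>\<close> is an up face, created together with \<open>w.\<T>\<close>.\<close>
lemma up_face_of_down_face:
  assumes red: "reduced d k (w @ [(i, l)])"
    and down: "w \<noteq> [] \<longrightarrow> opp_face \<Gamma> (wact w (root d)) (fst (last w)) \<in> new_faces d k (length w - 1) \<and>
      wact w (root d) \<in> children k (opp_face \<Gamma> (wact w (root d)) (fst (last w)))"
  shows "opp_face \<Gamma> (wact w (root d)) i \<in> new_faces d k (length w)"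
    and "wact w (root d) \<notin> children k (opp_face \<Gamma> (wact w (root d)) i)"
proof -
  define \<tau> where "\<tau> = wact w (root d)"
  have w: "reduced d k w" "i \<le> d" "w \<noteq> [] \<Longrightarrow> fst (last w) \<noteq> i" using red reduced_snoc by auto
  have \<tau>: "\<tau> \<in> cells d k" using word_act_in_cells root_in_cells w(1) \<tau>_def by blast
  have level: "cell_level \<tau> = length w"
  proof (cases "w = []")
    case False
    then show ?thesis using down child_props(3)[OF one_le_d] \<tau>_def by auto
  qed (simp add: \<tau>_def cell_level_root)
  obtain x where x: "x \<in> \<tau>" "\<Gamma> x = i" using colors_of_cell[OF \<tau>] w(2) by force
  have not_down: "\<tau> \<notin> children k (opp_face \<Gamma> \<tau> i)" if "opp_face \<Gamma> \<tau> i \<in> new_faces d k m" for m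
  proof
    assume child: "\<tau> \<in> children k (opp_face \<Gamma> \<tau> i)"
    then have "w \<noteq> []" using \<tau>_def root_notin_children by auto
    then have "opp_face \<Gamma> \<tau> i = opp_face \<Gamma> \<tau> (fst (last w))"
      using children_disjoint[OF one_le_d that _ child] down \<tau>_def by blast
    then show False using opp_face_inj[OF \<tau> w(2)] w(3) \<open>w \<noteq> []\<close> by metis
  qed
  then show "opp_face \<Gamma> \<tau> i \<in> new_faces d k (length w)"
    using cell_face_cases[OF one_le_d \<tau> x(1)] opp_face_eq[OF \<tau> x(1)] x(2) level by metis
  then show "\<tau> \<notin> children k (opp_face \<Gamma> \<tau> i)" using not_down by blast
qed

lemma word_act_root_down_face:
  assumes "reduced d k w" and "w \<noteq> []"
  shows "opp_face \<Gamma> (wact w (root d)) (fst (last w)) \<in> new_faces d k (length w - 1) \<and>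
    wact w (root d) \<in> children k (opp_face \<Gamma> (wact w (root d)) (fst (last w)))"
  using assms
proof (induction w rule: rev_induct)
  case (snoc x w)
  obtain i l where x: "x = (i, l)" by force
  have red: "reduced d k (w @ [(i, l)])" using snoc.prems(1) x by simp
  then have w: "reduced d k w" "i \<le> d" "l mod int k \<noteq> 0" using reduced_snoc by auto
  define \<tau>' where "\<tau>' = wact w (root d)"
  define \<sigma> where "\<sigma> = opp_face \<Gamma> \<tau>' i"
  have "w \<noteq> [] \<longrightarrow> opp_face \<Gamma> \<tau>' (fst (last w)) \<in> new_faces d k (length w - 1) \<and>
      \<tau>' \<in> children k (opp_face \<Gamma> \<tau>' (fst (last w)))"
    using snoc.IH w(1) \<tau>'_def by blast
  note up = up_face_of_down_face[OF red this[unfolded \<tau>'_def], folded \<tau>'_def \<sigma>_def]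
  have \<tau>': "\<tau>' \<in> cells d k" using word_act_in_cells root_in_cells w(1) \<tau>'_def by blast
  have moved: "lact i l \<tau>' \<noteq> \<tau>'" using letter_act_eq_iff[OF \<tau>' w(2), of l 0] letter_act_0[OF \<tau>' w(2)] w(3) by simp
  have in_delta: "lact i l \<tau>' \<in> delta d k \<sigma>" "\<tau>' \<in> delta d k \<sigma>"
    using letter_act_in_delta[OF \<tau>' w(2)] opp_face_props(2)[OF \<tau>' w(2)] \<sigma>_def by auto
  have "lact i l \<tau>' \<in> children k \<sigma>"
  proof (rule ccontr)
    assume "lact i l \<tau>' \<notin> children k \<sigma>"
    with moved show False using parent_unique[OF one_le_d up(1) in_delta(1) _ in_delta(2) up(2)] by blast
  qed
  then show ?case using x up(1) opp_face_letter_act[OF \<tau>' w(2)] \<tau>'_def \<sigma>_def by simp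
qed simp

lemma word_act_root_up_face:
  assumes "reduced d k (w @ [(i, l)])"
  shows "opp_face \<Gamma> (wact w (root d)) i \<in> new_faces d k (length w)"
    and "wact w (root d) \<notin> children k (opp_face \<Gamma> (wact w (root d)) i)"
  using up_face_of_down_face[OF assms] word_act_root_down_face assms reduced_snoc by auto

lemma cell_level_word_act_root:
  assumes "reduced d k w"
  shows "cell_level (wact w (root d)) = length w"
proof (cases "w = []")
  case False
  then have "cell_level (wact w (root d)) = Suc (length w - 1)"
    using word_act_root_down_face[OF assms False] child_props(3)[OF one_le_d] by blast
  with False show ?thesis by simp
qed (simp add: cell_level_root)

lemma word_act_root_last_letter:
  assumes red: "reduced d k (v @ [(i, l)])" "reduced d k (v' @ [(i', l')])"
    and eq: "wact (v @ [(i, l)]) (root d) = wact (v' @ [(i', l')]) (root d)"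
  shows "i' = i" "l' = l" "wact v' (root d) = wact v (root d)"
proof -
  have letters: "reduced d k v" "reduced d k v'" "i \<le> d" "i' \<le> d" "1 \<le> l" "l < int k" "1 \<le> l'" "l' < int k"
    using red reduced_snoc by auto
  define \<tau> where "\<tau> = wact (v @ [(i, l)]) (root d)"
  define t where "t = wact v (root d)"
  define t' where "t' = wact v' (root d)"
  have \<tau>: "\<tau> = lact i l t" "\<tau> = lact i' l' t'" "\<tau> \<in> cells d k"
    using eq word_act_in_cells[OF root_in_cells red(1)] \<tau>_def t_def t'_def by auto
  have t: "t \<in> cells d k" "t' \<in> cells d k"
    using word_act_in_cells[OF root_in_cells] letters t_def t'_def by auto
  have down: "opp_face \<Gamma> \<tau> i \<in> new_faces d k (length v)" "\<tau> \<in> children k (opp_face \<Gamma> \<tau> i)"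
    using word_act_root_down_face[OF red(1)] \<tau>_def by simp_all
  have down': "opp_face \<Gamma> \<tau> i' \<in> new_faces d k (length v')" "\<tau> \<in> children k (opp_face \<Gamma> \<tau> i')"
    using word_act_root_down_face[OF red(2)] \<tau>_def eq by simp_all
  have "opp_face \<Gamma> \<tau> i = opp_face \<Gamma> \<tau> i'"
    using children_disjoint[OF one_le_d down(1) down'(1) down(2) down'(2)] .
  then show "i' = i" using opp_face_inj[OF \<tau>(3) letters(3)] by simp
  define \<sigma> where "\<sigma> = opp_face \<Gamma> \<tau> i"
  have \<sigma>: "\<sigma> = opp_face \<Gamma> t i" "\<sigma> = opp_face \<Gamma> t' i"
    using opp_face_letter_act[OF t(1) letters(3), of l] opp_face_letter_act[OF t(2) letters(3), of l']
      \<tau>(1,2) \<open>i' = i\<close> \<sigma>_def by simp_all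
  have "t' = t"
  proof (rule parent_unique[OF one_le_d])
    show "\<sigma> \<in> new_faces d k (length v)" using word_act_root_up_face(1)[OF red(1)] \<sigma> t_def by simp
    show "t \<in> delta d k \<sigma>" "t' \<in> delta d k \<sigma>"
      using opp_face_props(2)[OF t(1) letters(3)] opp_face_props(2)[OF t(2) letters(3)] \<sigma> by simp_all
    show "t \<notin> children k \<sigma>" using word_act_root_up_face(2)[OF red(1)] \<sigma> t_def by simp
    show "t' \<notin> children k \<sigma>" using word_act_root_up_face(2)[OF red(2)] \<sigma> t'_def \<open>i' = i\<close> by simp
  qed
  then show "wact v' (root d) = wact v (root d)" using t_def t'_def by simp
  have "l mod int k = l' mod int k" using \<tau> \<open>i' = i\<close> \<open>t' = t\<close> letter_act_eq_iff[OF t(1) letters(3)] by simp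
  then show "l' = l" using letters by simp
qed

lemma word_act_root_inj:
  assumes "reduced d k v" and "reduced d k v'" and "wact v (root d) = wact v' (root d)"
  shows "v = v'"
  using assms
proof (induction v arbitrary: v' rule: rev_induct)
  case Nil
  then have "length v' = cell_level (root d)" using cell_level_word_act_root[OF Nil.prems(2)] by simp
  then show ?case using cell_level_root by simp
next
  case (snoc x v)
  obtain i l where x: "x = (i, l)" by force
  have "length v' = Suc (length v)"
    using cell_level_word_act_root[OF snoc.prems(1)] cell_level_word_act_root[OF snoc.prems(2)] snoc.prems(3)
    by simp
  then obtain v0 i' l' where v': "v' = v0 @ [(i', l')]" by (metis length_Suc_conv_rev prod.collapse)
  note last_letter = word_act_root_last_letter[of v i l v0 i' l']
  have "v0 = v"
    using snoc.IH snoc.prems x v' last_letter reduced_snoc[of d k v] reduced_snoc[of d k v0] by metis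
  then show ?case using snoc.prems x v' last_letter by simp
qed

lemma word_act_root_surj:
  assumes "\<tau> \<in> cells d k"
  obtains w where "reduced d k w" "wact w (root d) = \<tau>"
proof -
  have "\<exists>w. reduced d k w \<and> wact w (root d) = \<tau>"
    using assms
  proof (induction "cell_level \<tau>" arbitrary: \<tau>)
    case 0
    then have "\<tau> = root d" using cell_level_eq_0_imp_root[OF one_le_d] by simp
    then show ?case using reduced_iff by (intro exI[of _ "[]"]) simp
  next
    case (Suc n)
    obtain \<rho> where \<rho>: "\<rho> \<in> new_faces d k n" "\<tau> \<in> children k \<rho>"
      using cell_level_Suc_imp_child[OF one_le_d Suc.prems Suc.hyps(2)[symmetric]] .
    obtain \<tau>' where \<tau>': "\<tau>' \<in> delta d k \<rho>" "cell_level \<tau>' = n"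
      using new_face_parent[OF one_le_d \<rho>(1)] .
    then have "\<tau>' \<in> cells d k" by (simp add: delta_def)
    then obtain w where w: "reduced d k w" "wact w (root d) = \<tau>'" using Suc.hyps(1) \<tau>'(2) by blast
    obtain y where y: "y \<in> \<tau>'" "\<rho> = \<tau>' - {y}" using new_face_eq_minus_vertex[OF one_le_d \<rho>(1) \<tau>'(1)] .
    then have \<rho>_opp: "\<rho> = opp_face \<Gamma> \<tau>' (\<Gamma> y)" using opp_face_eq[OF \<open>\<tau>' \<in> cells d k\<close>] by simp
    have color: "\<Gamma> y \<le> d" using colors_of_cell[OF \<open>\<tau>' \<in> cells d k\<close>] y(1) by auto
    have "\<tau> \<in> delta d k \<rho>" using child_props(1,2)[OF one_le_d \<rho>] by (simp add: delta_def)
    then obtain l where "lact (\<Gamma> y) l \<tau>' = \<tau>"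
      using letter_act_onto[OF \<open>\<tau>' \<in> cells d k\<close> color] \<rho>_opp by metis
    then show ?case
      using reduced_mult_letter[OF w(1) _ one_le_k, of "(\<Gamma> y, l)"] color
        word_act_mult_letter[OF root_in_cells w(1), of "(\<Gamma> y, l)"] w(2) by auto
  qed
  with that show thesis by blast
qed

lemma line_dist_word_act_root: "reduced d k w \<Longrightarrow> line_dist d k (wact w (root d)) (root d) = length w"
  using line_dist_root[OF one_le_d word_act_in_cells[OF root_in_cells]] cell_level_word_act_root by simp

lemma word_act_word_inv:
  assumes "\<tau> \<in> cells d k" and "reduced d k u"
  shows "wact (word_inv k u) (wact u \<tau>) = \<tau>"
  using word_act_mult_word[OF assms(1,2) reduced_word_inv[OF assms(2)]] mult_word_inv_right[of k u] by simp

text \<open>Rather than from associativity of the normal-form product, left cancellation is read off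
  from the injectivity of \<open>w \<mapsto> w.\<T>\<close>.\<close>
lemma mult_word_cancel_left:
  assumes "reduced d k u" and "reduced d k w"
  shows "mult_word k (word_inv k u) (mult_word k u w) = w"
proof (rule word_act_root_inj)
  have uw: "reduced d k (mult_word k u w)" and u': "reduced d k (word_inv k u)"
    using reduced_mult_word reduced_word_inv assms one_le_k by blast+
  then show "reduced d k (mult_word k (word_inv k u) (mult_word k u w))"
    using reduced_mult_word one_le_k by blast
  show "reduced d k w" by fact
  have "wact (word_inv k u) (root d) \<in> cells d k" using word_act_in_cells[OF root_in_cells u'] .
  then show "wact (mult_word k (word_inv k u) (mult_word k u w)) (root d) = wact w (root d)"
    using word_act_mult_word[OF root_in_cells u' uw] word_act_mult_word[OF _ assms] u'
      word_act_mult_word[OF root_in_cells u' assms(1)] mult_word_inv_left[of k u] by simp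
qed

lemma word_act_inj:
  assumes "\<tau> \<in> cells d k" and w: "reduced d k w" "reduced d k w'" and "wact w \<tau> = wact w' \<tau>"
  shows "w = w'"
proof -
  obtain u where u: "reduced d k u" "wact u (root d) = \<tau>" using word_act_root_surj[OF assms(1)] .
  have "mult_word k u w = mult_word k u w'"
    using word_act_root_inj reduced_mult_word[OF u(1) _ one_le_k] w assms(4)
      word_act_mult_word[OF root_in_cells u(1)] u(2) by metis
  then show ?thesis using mult_word_cancel_left[OF u(1)] w by metis
qed

lemma simply_transitive:
  assumes "\<tau> \<in> cells d k" and "\<tau>' \<in> cells d k"
  shows "\<exists>!w. reduced d k w \<and> wact w \<tau> = \<tau>'"
proof -
  obtain u where u: "reduced d k u" "wact u (root d) = \<tau>" using word_act_root_surj[OF assms(1)] .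
  obtain u' where u': "reduced d k u'" "wact u' (root d) = \<tau>'" using word_act_root_surj[OF assms(2)] .
  have u_inv: "reduced d k (word_inv k u)" "wact (word_inv k u) \<tau> = root d"
    using reduced_word_inv[OF u(1)] word_act_word_inv[OF root_in_cells u(1)] u(2) by simp_all
  have "reduced d k (mult_word k (word_inv k u) u') \<and> wact (mult_word k (word_inv k u) u') \<tau> = \<tau>'"
    using reduced_mult_word[OF u_inv(1) u'(1) one_le_k] word_act_mult_word[OF assms(1) u_inv(1) u'(1)]
      u_inv(2) u'(2) by simp
  then show ?thesis using word_act_inj[OF assms(1)] by blast
qed

end

theorem lemma5:
  fixes d k :: nat and \<Gamma> :: "vtx \<Rightarrow> nat"
    and \<Omega> :: "vtx set \<Rightarrow> int \<Rightarrow> vtx set \<Rightarrow> vtx set"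
  assumes "1 \<le> d" and "1 \<le> k"
    and "coloring d k \<Gamma>" and "k_ordering d k \<Omega>"
  shows "(\<forall>w m. reduced d k w \<longrightarrow>
            (length w = m \<longleftrightarrow> line_dist d k (word_act k \<Gamma> \<Omega> w (root d)) (root d) = m))
       \<and> (\<forall>\<tau>\<in>cells d k. \<forall>\<tau>'\<in>cells d k. \<exists>!w. reduced d k w \<and> word_act k \<Gamma> \<Omega> w \<tau> = \<tau>')"
proof -
  interpret arboreal_action d k \<Gamma> \<Omega> using assms by unfold_locales
  show ?thesis using line_dist_word_act_root simply_transitive by auto
qed

end
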